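(* Let $\mathbf{f}\colon\mathbb{R}^n\to\mathbb{R}^n$ be a polynomial vector field, let $\mathcal{X}_0,\mathcal{X}_u\subseteq\mathbb{R}^n$, and let $B\in\mathbb{R}[\mathbf{x}]$. If $B$ is an invariant barrier certificate of $\dot{\mathbf{x}}=\mathbf{f}(\mathbf{x})$ with respect to $\mathcal{X}_0$ and $\mathcal{X}_u$, then $\Psi=\{\mathbf{x}\mid B(\mathbf{x})\le 0\}$ is an inductive invariant of the system. Conversely, if $\Psi=\{\mathbf{x}\mid B(\mathbf{x})\le 0\}$ is an inductive invariant of the system satisfying $\mathcal{X}_0\subseteq\Psi$ and $\Psi\cap\mathcal{X}_u=\emptyset$, then $B$ is an invariant barrier certificate of the system with respect to $\mathcal{X}_0$ and $\mathcal{X}_u$.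
   Context: Consider the autonomous system $\dot{\mathbf{x}}=\mathbf{f}(\mathbf{x})$ with $\mathbf{f}$ polynomial. For $\mathbf{x}_0\in\mathbb{R}^n$, $\boldsymbol{\zeta}_{\mathbf{x}_0}\colon[0,T)\to\mathbb{R}^n$ denotes the unique solution with $\boldsymbol{\zeta}_{\mathbf{x}_0}(0)=\mathbf{x}_0$, defined on its maximal interval of existence $[0,T)$, $T\in\mathbb{R}^+\cup\{\infty\}$. A set $\Psi\subseteq\mathbb{R}^n$ is an inductive invariant iff for all $\mathbf{x}_0\in\Psi$ and all $t\in[0,T)$, $\boldsymbol{\zeta}_{\mathbf{x}_0}(t)\in\Psi$. The Lie derivatives of $B$ along $\mathbf{f}$ are $\mathcal{L}^0_{\mathbf{f}}B=B$ and $\mathcal{L}^k_{\mathbf{f}}B=\langle \nabla \mathcal{L}^{k-1}_{\mathbf{f}}B,\mathbf{f}\rangle$ for $k>0$. $N_{B,\mathbf{f}}\in\mathbb{N}^+$ denotes the completeness threshold: the minimal index $i$ such that $\mathcal{L}^{i+1}_{\mathbf{f}}B$ belongs to the polynomial ideal generated by $\mathcal{L}^0_{\mathbf{f}}B,\dots,\mathcal{L}^i_{\mathbf{f}}B$. A polynomial $B$ is an invariant barrier certificate (w.r.t. $\mathcal{X}_0,\mathcal{X}_u$) iff (initial) $B(\mathbf{x})\le 0$ for all $\mathbf{x}\in\mathcal{X}_0$; (consecution) for all $\mathbf{x}\in\mathbb{R}^n$ and all $1\le i\le N_{B,\mathbf{f}}$: if $\mathcal{L}^j_{\mathbf{f}}B(\mathbf{x})=0$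 for all $0\le j\le i-1$, then $\mathcal{L}^i_{\mathbf{f}}B(\mathbf{x})\le 0$; (separation) $B(\mathbf{x})>0$ for all $\mathbf{x}\in\mathcal{X}_u$. *)

theory Defs
  imports "HOL-Analysis.Analysis"
begin

text \<open>Over an infinite field
  these are exactly the functions induced by elements of R[x_1,...,x_n].\<close>

inductive polyfun :: "(real ^ 'n \<Rightarrow> real) \<Rightarrow> bool" where
  pf_const: "polyfun (\<lambda>x. c)"
| pf_coord: "polyfun (\<lambda>x. x $ i)"
| pf_add: "polyfun p \<Longrightarrow> polyfun q \<Longrightarrow> polyfun (\<lambda>x. p x + q x)"
| pf_mult: "polyfun p \<Longrightarrow> polyfun q \<Longrightarrow> polyfun (\<lambda>x. p x * q x)"

definition poly_vf :: "(real ^ 'n \<Rightarrow> real ^ 'n) \<Rightarrow> bool" where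
  "poly_vf f \<longleftrightarrow> (\<forall>i. polyfun (\<lambda>x. f x $ i))"

definition lie_deriv :: "(real ^ 'n \<Rightarrow> real ^ 'n) \<Rightarrow> (real ^ 'n \<Rightarrow> real) \<Rightarrow> (real ^ 'n \<Rightarrow> real)" where
  "lie_deriv f B = (\<lambda>x. frechet_derivative B (at x) (f x))"

definition lie_iter :: "(real ^ 'n \<Rightarrow> real ^ 'n) \<Rightarrow> nat \<Rightarrow> (real ^ 'n \<Rightarrow> real) \<Rightarrow> (real ^ 'n \<Rightarrow> real)" where
  "lie_iter f k B = (lie_deriv f ^^ k) B"

definition in_poly_ideal :: "(real ^ 'n \<Rightarrow> real) \<Rightarrow> (nat \<Rightarrow> real ^ 'n \<Rightarrow> real) \<Rightarrow> nat \<Rightarrow> bool" where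
  "in_poly_ideal p g i \<longleftrightarrow>
     (\<exists>h. (\<forall>j\<le>i. polyfun (h j)) \<and> (\<forall>x. p x = (\<Sum>j\<le>i. h j x * g j x)))"

definition compl_threshold :: "(real ^ 'n \<Rightarrow> real) \<Rightarrow> (real ^ 'n \<Rightarrow> real ^ 'n) \<Rightarrow> nat" where
  "compl_threshold B f =
     (LEAST i. 1 \<le> i \<and> in_poly_ideal (lie_iter f (Suc i) B) (\<lambda>j. lie_iter f j B) i)"

text \<open>Inductive invariant: every solution starting in Psi, on any interval [0,T)
  on which it exists, stays in Psi (equivalent to the maximal-solution formulation,
  since solutions are unique and every solution is a restriction of the maximal one).\<close>
definition inductive_invariant :: "(real ^ 'n \<Rightarrow> real ^ 'n) \<Rightarrow> (real ^ 'n) set \<Rightarrow> bool" where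
  "inductive_invariant f Psi \<longleftrightarrow>
     (\<forall>x0 \<in> Psi. \<forall>(T::real) (z::real \<Rightarrow> real ^ 'n).
        z 0 = x0 \<and> (\<forall>t\<in>{0..<T}. (z has_vector_derivative f (z t)) (at t within {0..<T}))
        \<longrightarrow> (\<forall>t\<in>{0..<T}. z t \<in> Psi))"

definition inv_barrier_cert ::
  "(real ^ 'n \<Rightarrow> real ^ 'n) \<Rightarrow> (real ^ 'n) set \<Rightarrow> (real ^ 'n) set \<Rightarrow> (real ^ 'n \<Rightarrow> real) \<Rightarrow> bool" where
  "inv_barrier_cert f X0 Xu B \<longleftrightarrow>
     (\<forall>x\<in>X0. B x \<le> 0) \<and>
     (\<forall>x. \<forall>i. 1 \<le> i \<and> i \<le> compl_threshold B f \<longrightarrow>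
         (\<forall>j. j \<le> i - 1 \<longrightarrow> lie_iter f j B x = 0) \<longrightarrow> lie_iter f i B x \<le> 0) \<and>
     (\<forall>x\<in>Xu. B x > 0)"

end

(* Along a solution z of x' = f x the functions g k t = L^k B (z t) satisfy g k' = g (k + 1), and by
   the choice of the completeness threshold N (which exists by Hilbert's basis theorem)
   g (N + 1) = (SUM j <= N. h j (z t) * g j t) with continuous coefficients.  At a time s with
   B (z s) = 0 either some g i s, i <= N, is nonzero -- then the first such one is negative by
   consecution and forces g 0 < 0 right after s -- or all of them vanish, and then the linear system
   keeps g 0 = 0 right after s.  A supremum argument turns this right persistence of B (z t) <= 0
   into invariance of {B <= 0}.  Conversely, if consecution failed at x, the first non-vanishing Lie
   derivative of B at x would be positive, and B would become positive along the solution through x,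
   which exists by the Picard-Lindeloef theorem. *)

theory Submission
  imports Defs "HOL-Library.Function_Algebras"
begin

section \<open>Ideals in subrings and Hilbert's basis theorem\<close>

definition is_subring :: "'a::comm_ring_1 set \<Rightarrow> bool" where
  "is_subring R \<longleftrightarrow> 0 \<in> R \<and> 1 \<in> R \<and> (\<forall>x\<in>R. \<forall>y\<in>R. x + y \<in> R \<and> x * y \<in> R \<and> x - y \<in> R)"

definition is_ideal :: "'a::comm_ring_1 set \<Rightarrow> 'a set \<Rightarrow> bool" where
  "is_ideal R I \<longleftrightarrow> I \<subseteq> R \<and> 0 \<in> I \<and> (\<forall>x\<in>I. \<forall>y\<in>I. x + y \<in> I) \<and> (\<forall>r\<in>R. \<forall>x\<in>I. r * x \<in> I)"

definition ideal_span :: "'a::comm_ring_1 set \<Rightarrow> 'a set \<Rightarrow> 'a set" where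
  "ideal_span R G = {\<Sum>g\<in>G. r g * g | r. \<forall>g\<in>G. r g \<in> R}"

definition noetherian :: "'a::comm_ring_1 set \<Rightarrow> bool" where
  "noetherian R \<longleftrightarrow> (\<forall>I. is_ideal R I \<longrightarrow> (\<exists>G. finite G \<and> G \<subseteq> I \<and> I \<subseteq> ideal_span R G))"

lemma sum_in_subring: "is_subring R \<Longrightarrow> (\<And>x. x \<in> A \<Longrightarrow> f x \<in> R) \<Longrightarrow> sum f A \<in> R"
  by (induction A rule: infinite_finite_induct) (auto simp: is_subring_def)

lemma sum_in_ideal: "is_ideal R I \<Longrightarrow> (\<And>x. x \<in> A \<Longrightarrow> f x \<in> I) \<Longrightarrow> sum f A \<in> I"
  by (induction A rule: infinite_finite_induct) (auto simp: is_ideal_def)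

lemma diff_in_ideal:
  assumes "is_subring R" "is_ideal R I" "x \<in> I" "y \<in> I"
  shows "x - y \<in> I"
proof -
  have "- 1 \<in> R" using assms(1) by (metis is_subring_def diff_0)
  then have "x + (- 1) * y \<in> I" using assms(2-) unfolding is_ideal_def by blast
  then show ?thesis by simp
qed

lemma ideal_span_is_ideal:
  assumes R: "is_subring R" and G: "G \<subseteq> R"
  shows "is_ideal R (ideal_span R G)"
  unfolding is_ideal_def
proof (intro conjI ballI)
  show "ideal_span R G \<subseteq> R"
    using G R by (auto simp: ideal_span_def is_subring_def intro!: sum_in_subring)
  show "0 \<in> ideal_span R G"
    using R by (auto simp: ideal_span_def is_subring_def intro!: exI[of _ "\<lambda>_. 0"])
  fix x y assume "x \<in> ideal_span R G" "y \<in> ideal_span R G"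
  then obtain r s where "\<forall>g\<in>G. r g \<in> R" "x = (\<Sum>g\<in>G. r g * g)" "\<forall>g\<in>G. s g \<in> R" "y = (\<Sum>g\<in>G. s g * g)"
    by (auto simp: ideal_span_def)
  then show "x + y \<in> ideal_span R G"
    using R by (auto simp: ideal_span_def is_subring_def sum.distrib distrib_right
        intro!: exI[of _ "\<lambda>g. r g + s g"])
next
  fix c x assume "c \<in> R" "x \<in> ideal_span R G"
  then obtain r where "\<forall>g\<in>G. r g \<in> R" "x = (\<Sum>g\<in>G. r g * g)"
    by (auto simp: ideal_span_def)
  then show "c * x \<in> ideal_span R G"
    using R \<open>c \<in> R\<close> by (auto simp: ideal_span_def is_subring_def sum_distrib_left mult.assoc
        intro!: exI[of _ "\<lambda>g. c * r g"])
qed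

lemma generator_in_ideal_span:
  assumes "is_subring R" "finite G" "g \<in> G"
  shows "g \<in> ideal_span R G"
proof -
  have "(\<Sum>h\<in>G. (if h = g then 1 else 0) * h) = (\<Sum>h\<in>G. if h = g then h else 0)"
    by (rule sum.cong) auto
  also have "\<dots> = g"
    using assms(2,3) by simp
  finally show ?thesis
    using assms(1) by (auto simp: ideal_span_def is_subring_def intro!: exI[of _ "\<lambda>h. if h = g then 1 else 0"])
qed

lemma ideal_span_least:
  assumes "is_ideal R I" "G \<subseteq> I"
  shows "ideal_span R G \<subseteq> I"
  using assms by (auto simp: ideal_span_def is_ideal_def intro!: sum_in_ideal)

lemma is_ideal_UN_mono:
  fixes C :: "nat \<Rightarrow> 'a::comm_ring_1 set"
  assumes C: "\<And>d. is_ideal R (C d)" and mono: "\<And>d e. d \<le> e \<Longrightarrow> C d \<subseteq> C e"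
  shows "is_ideal R (\<Union>d. C d)"
  unfolding is_ideal_def
proof (intro conjI ballI)
  have "C d \<subseteq> R" "0 \<in> C d" for d using C[of d] unfolding is_ideal_def by auto
  then show "(\<Union>d. C d) \<subseteq> R" "0 \<in> (\<Union>d. C d)" by auto
  fix x y assume "x \<in> (\<Union>d. C d)" "y \<in> (\<Union>d. C d)"
  then obtain d e where "x \<in> C d" "y \<in> C e" by blast
  then have "x \<in> C (max d e)" "y \<in> C (max d e)"
    using mono[of d "max d e"] mono[of e "max d e"] by auto
  then show "x + y \<in> (\<Union>d. C d)" using C by (auto simp: is_ideal_def)
next
  fix r x assume "r \<in> R" "x \<in> (\<Union>d. C d)"
  then obtain d where "x \<in> C d" by blast
  then have "r * x \<in> C d" using C[of d] \<open>r \<in> R\<close> unfolding is_ideal_def by blast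
  then show "r * x \<in> (\<Union>d. C d)" by blast
qed

lemma noetherian_chain_stabilizes:
  fixes C :: "nat \<Rightarrow> 'a::comm_ring_1 set"
  assumes R: "noetherian R"
    and C: "\<And>d. is_ideal R (C d)" and mono: "\<And>d e. d \<le> e \<Longrightarrow> C d \<subseteq> C e"
  shows "\<exists>D. \<forall>d\<ge>D. C d \<subseteq> C D"
proof -
  have "is_ideal R (\<Union>d. C d)" using C mono by (rule is_ideal_UN_mono)
  then obtain G where G: "finite G" "G \<subseteq> (\<Union>d. C d)" "(\<Union>d. C d) \<subseteq> ideal_span R G"
    using R by (auto simp: noetherian_def)
  obtain \<delta> where \<delta>: "\<And>g. g \<in> G \<Longrightarrow> g \<in> C (\<delta> g)" using G(2) by (metis UN_E subsetD)
  have "g \<in> C (Max (\<delta> ` G))" if "g \<in> G" for g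
    using \<delta>[OF that] mono[OF Max_ge[of "\<delta> ` G" "\<delta> g"]] that G(1) by auto
  then have "ideal_span R G \<subseteq> C (Max (\<delta> ` G))" by (intro ideal_span_least[OF C]) blast
  then show ?thesis using G(3) by blast
qed

definition poly_over :: "'a::comm_ring_1 set \<Rightarrow> 'a poly set" where
  "poly_over R = {p. \<forall>j. coeff p j \<in> R}"

lemma is_subring_poly_over: "is_subring R \<Longrightarrow> is_subring (poly_over R)"
  by (auto simp: is_subring_def poly_over_def coeff_1 intro!: coeff_mult_semiring_closed)

lemma monom_in_poly_over: "is_subring R \<Longrightarrow> c \<in> R \<Longrightarrow> monom c k \<in> poly_over R"
  by (auto simp: is_subring_def poly_over_def coeff_monom)

definition coeff_ideal :: "'a::comm_ring_1 poly set \<Rightarrow> nat \<Rightarrow> 'a set" where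
  "coeff_ideal I d = {coeff p d | p. p \<in> I \<and> degree p \<le> d}"

lemma is_ideal_coeff_ideal:
  assumes R: "is_subring R" and I: "is_ideal (poly_over R) I"
  shows "is_ideal R (coeff_ideal I d)"
  unfolding is_ideal_def
proof (intro conjI ballI)
  show "coeff_ideal I d \<subseteq> R" "0 \<in> coeff_ideal I d"
    using I by (force simp: coeff_ideal_def is_ideal_def poly_over_def)+
  fix x y assume "x \<in> coeff_ideal I d" "y \<in> coeff_ideal I d"
  then obtain p q where "p \<in> I" "degree p \<le> d" "x = coeff p d" "q \<in> I" "degree q \<le> d" "y = coeff q d"
    by (auto simp: coeff_ideal_def)
  then show "x + y \<in> coeff_ideal I d"
    using I by (auto simp: coeff_ideal_def is_ideal_def intro!: exI[of _ "p + q"] degree_add_le)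
next
  fix r x assume r: "r \<in> R" and "x \<in> coeff_ideal I d"
  then obtain p where p: "p \<in> I" "degree p \<le> d" "x = coeff p d" by (auto simp: coeff_ideal_def)
  have "monom r 0 * p \<in> I" using I p(1) monom_in_poly_over[OF R r] by (auto simp: is_ideal_def)
  moreover have "degree (monom r 0 * p) \<le> d"
    using p(2) degree_smult_le[of r p] by (simp add: monom_0)
  ultimately show "r * x \<in> coeff_ideal I d"
    unfolding coeff_ideal_def using p(3) by (force simp: coeff_monom_mult)
qed

lemma coeff_ideal_mono:
  fixes R :: "'a::comm_ring_1 set"
  assumes R: "is_subring R" and I: "is_ideal (poly_over R) I" and "d \<le> e"
  shows "coeff_ideal I d \<subseteq> coeff_ideal I e"
proof
  fix x assume "x \<in> coeff_ideal I d"
  then obtain p where p: "p \<in> I" "degree p \<le> d" "x = coeff p d" by (auto simp: coeff_ideal_def)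
  have "monom 1 (e - d) * p \<in> I"
    using I p(1) monom_in_poly_over[OF R] R by (auto simp: is_ideal_def is_subring_def)
  moreover have "degree (monom 1 (e - d) * p) \<le> e"
    using p(2) \<open>d \<le> e\<close> degree_mult_le[of "monom 1 (e - d)" p] degree_monom_le[of "1::'a" "e - d"] by linarith
  moreover have "coeff (monom 1 (e - d) * p) e = x"
    using p(3) \<open>d \<le> e\<close> by (simp add: coeff_monom_mult)
  ultimately show "x \<in> coeff_ideal I e" unfolding coeff_ideal_def by blast
qed

lemma coeff_ideal_lift:
  assumes R: "is_subring R" and "finite G" and c: "c \<in> ideal_span R G" and "d \<le> n"
    and w: "\<And>g. g \<in> G \<Longrightarrow> w g \<in> poly_over R \<and> degree (w g) \<le> d \<and> coeff (w g) d = g"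
  shows "\<exists>q \<in> ideal_span (poly_over R) (w ` G). degree q \<le> n \<and> coeff q n = c"
proof -
  obtain r where r: "\<forall>g\<in>G. r g \<in> R" "c = (\<Sum>g\<in>G. r g * g)"
    using c by (auto simp: ideal_span_def)
  define q where "q = (\<Sum>g\<in>G. monom (r g) (n - d) * w g)"
  have Q: "is_subring (poly_over R)" by (rule is_subring_poly_over[OF R])
  have span: "is_ideal (poly_over R) (ideal_span (poly_over R) (w ` G))"
    using w by (intro ideal_span_is_ideal[OF Q]) auto
  have "q \<in> ideal_span (poly_over R) (w ` G)"
    unfolding q_def
  proof (rule sum_in_ideal[OF span])
    fix g assume "g \<in> G"
    then have "w g \<in> ideal_span (poly_over R) (w ` G)"
      using generator_in_ideal_span[OF Q] \<open>finite G\<close> by blast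
    then show "monom (r g) (n - d) * w g \<in> ideal_span (poly_over R) (w ` G)"
      using span monom_in_poly_over[OF R] r(1) \<open>g \<in> G\<close> by (auto simp: is_ideal_def)
  qed
  moreover have "degree q \<le> n"
    unfolding q_def
  proof (rule degree_sum_le[OF \<open>finite G\<close>])
    fix g assume "g \<in> G"
    then show "degree (monom (r g) (n - d) * w g) \<le> n"
      using w \<open>d \<le> n\<close> degree_mult_le[of "monom (r g) (n - d)" "w g"] degree_monom_le[of "r g" "n - d"]
      by fastforce
  qed
  moreover have "coeff q n = (\<Sum>g\<in>G. r g * coeff (w g) d)"
    unfolding q_def coeff_sum using \<open>d \<le> n\<close> by (intro sum.cong) (auto simp: coeff_monom_mult)
  then have "coeff q n = c"
    using w by (simp add: r(2))
  ultimately show ?thesis by blast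
qed

lemma poly_ideal_subset_of_lead_coeff_match:
  assumes Q: "is_subring Q" and I: "is_ideal Q I" and J: "is_ideal Q J" "J \<subseteq> I"
    and match: "\<And>p. p \<in> I \<Longrightarrow> \<exists>q\<in>J. degree q \<le> degree p \<and> coeff q (degree p) = lead_coeff p"
  shows "I \<subseteq> J"
proof
  fix p assume "p \<in> I"
  then show "p \<in> J"
  proof (induction "degree p" arbitrary: p rule: less_induct)
    case less
    obtain q where q: "q \<in> J" "degree q \<le> degree p" "coeff q (degree p) = lead_coeff p"
      using match[OF less.prems] by blast
    have diff: "p - q \<in> I" using diff_in_ideal[OF Q I less.prems] q(1) J(2) by blast
    have "p - q \<in> J"
    proof (cases "p - q = 0")
      case True
      then show ?thesis using J(1) by (simp add: is_ideal_def)
    next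
      case False
      then have "lead_coeff (p - q) \<noteq> 0" using leading_coeff_0_iff by blast
      moreover have "coeff (p - q) (degree p) = 0" using q(3) by simp
      moreover have "degree (p - q) \<le> degree p" using q(2) by (simp add: degree_diff_le)
      ultimately have "degree (p - q) < degree p" using le_neq_implies_less by fastforce
      then show ?thesis using less.hyps diff by blast
    qed
    then have "(p - q) + q \<in> J" using q(1) J(1) unfolding is_ideal_def by blast
    then show "p \<in> J" by simp
  qed
qed

theorem hilbert_basis:
  assumes R: "is_subring R" and noeth: "noetherian R"
  shows "noetherian (poly_over R)"
  unfolding noetherian_def
proof (intro allI impI)
  fix I assume I: "is_ideal (poly_over R) I"
  let ?Q = "poly_over R" and ?C = "coeff_ideal I"
  have Q: "is_subring ?Q" by (rule is_subring_poly_over[OF R])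
  have IQ: "I \<subseteq> ?Q" using I by (simp add: is_ideal_def)
  obtain D where D: "\<And>d. D \<le> d \<Longrightarrow> ?C d \<subseteq> ?C D"
    using noetherian_chain_stabilizes[of R ?C, OF noeth is_ideal_coeff_ideal[OF R I]
        coeff_ideal_mono[OF R I]] by blast
  have "\<forall>d. \<exists>G. finite G \<and> G \<subseteq> ?C d \<and> ?C d \<subseteq> ideal_span R G"
    using noeth is_ideal_coeff_ideal[OF R I] unfolding noetherian_def by blast
  then obtain G where "\<forall>d. finite (G d) \<and> G d \<subseteq> ?C d \<and> ?C d \<subseteq> ideal_span R (G d)"
    by (rule choice[THEN exE])
  then have G: "\<And>d. finite (G d)" "\<And>d. G d \<subseteq> ?C d" "\<And>d. ?C d \<subseteq> ideal_span R (G d)"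
    by auto
  have "\<forall>d g. \<exists>p. g \<in> ?C d \<longrightarrow> p \<in> I \<and> degree p \<le> d \<and> coeff p d = g"
    by (auto simp: coeff_ideal_def)
  then obtain w where w: "\<And>d g. g \<in> ?C d \<Longrightarrow> w d g \<in> I \<and> degree (w d g) \<le> d \<and> coeff (w d g) d = g"
    by metis
  define H where "H = (\<Union>d\<le>D. w d ` G d)"
  have H: "finite H" "H \<subseteq> I" using G(1,2) w by (auto simp: H_def subset_iff)
  have span: "is_ideal ?Q (ideal_span ?Q H)"
    using H(2) IQ by (intro ideal_span_is_ideal[OF Q]) auto
  have top: "\<exists>q \<in> ideal_span ?Q H. degree q \<le> degree p \<and> coeff q (degree p) = lead_coeff p"
    if "p \<in> I" for p
  proof -
    define d where "d = min (degree p) D"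
    have "lead_coeff p \<in> ?C (degree p)" using that by (auto simp: coeff_ideal_def)
    moreover have "?C (degree p) \<subseteq> ideal_span R (G d)"
      using G(3) D[of "degree p"] G(3)[of D] by (cases "degree p \<le> D") (auto simp: d_def)
    moreover have "w d g \<in> ?Q \<and> degree (w d g) \<le> d \<and> coeff (w d g) d = g" if "g \<in> G d" for g
      using w[of g d] G(2) IQ that by blast
    ultimately obtain q where q: "q \<in> ideal_span ?Q (w d ` G d)" "degree q \<le> degree p"
        "coeff q (degree p) = lead_coeff p"
      using coeff_ideal_lift[OF R G(1)[of d], of "lead_coeff p" d "degree p" "w d"] by (auto simp: d_def)
    have "d \<le> D" by (simp add: d_def)
    then have "w d ` G d \<subseteq> H" unfolding H_def by blast
    then have "w d ` G d \<subseteq> ideal_span ?Q H"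
      using generator_in_ideal_span[OF Q H(1)] by blast
    then have "q \<in> ideal_span ?Q H" using ideal_span_least[OF span] q(1) by blast
    then show ?thesis using q(2,3) by blast
  qed
  have "I \<subseteq> ideal_span ?Q H"
    by (rule poly_ideal_subset_of_lead_coeff_match[OF Q I span ideal_span_least[OF I H(2)] top])
  then show "\<exists>G. finite G \<and> G \<subseteq> I \<and> I \<subseteq> ideal_span ?Q G" using H by blast
qed

lemma noetherian_image:
  assumes Q: "is_subring Q" "noetherian Q" and P: "is_subring (\<phi> ` Q)"
    and add: "\<And>x y. \<phi> (x + y) = \<phi> x + \<phi> y" and mult: "\<And>x y. \<phi> (x * y) = \<phi> x * \<phi> y"
  shows "noetherian (\<phi> ` Q)"
  unfolding noetherian_def
proof (intro allI impI)
  interpret \<phi>: additive \<phi> by standard (rule add)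
  fix J assume J: "is_ideal (\<phi> ` Q) J"
  define I where "I = {q \<in> Q. \<phi> q \<in> J}"
  have "is_ideal Q I"
    using Q(1) J unfolding is_ideal_def is_subring_def I_def
    by (auto simp: \<phi>.zero add mult)
  then obtain G where G: "finite G" "G \<subseteq> I" "I \<subseteq> ideal_span Q G"
    using Q(2) by (auto simp: noetherian_def)
  have "J \<subseteq> ideal_span (\<phi> ` Q) (\<phi> ` G)"
  proof
    fix y assume "y \<in> J"
    then obtain q where q: "q \<in> I" "y = \<phi> q" using J by (auto simp: is_ideal_def I_def)
    then obtain r where r: "\<forall>g\<in>G. r g \<in> Q" "q = (\<Sum>g\<in>G. r g * g)"
      using G(3) by (auto simp: ideal_span_def)
    have "y = (\<Sum>g\<in>G. \<phi> (r g) * \<phi> g)" by (simp add: q(2) r(2) \<phi>.sum mult)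
    also have "\<dots> \<in> ideal_span (\<phi> ` Q) (\<phi> ` G)"
    proof (rule sum_in_ideal[OF ideal_span_is_ideal[OF P]])
      show "\<phi> ` G \<subseteq> \<phi> ` Q" using G(2) by (auto simp: I_def)
      fix g assume "g \<in> G"
      then have "\<phi> g \<in> ideal_span (\<phi> ` Q) (\<phi> ` G)"
        using generator_in_ideal_span[OF P] G(1) by blast
      moreover have "is_ideal (\<phi> ` Q) (ideal_span (\<phi> ` Q) (\<phi> ` G))"
        using G(2) by (intro ideal_span_is_ideal[OF P]) (auto simp: I_def)
      ultimately show "\<phi> (r g) * \<phi> g \<in> ideal_span (\<phi> ` Q) (\<phi> ` G)"
        using r(1) \<open>g \<in> G\<close> by (auto simp: is_ideal_def)
    qed
    finally show "y \<in> ideal_span (\<phi> ` Q) (\<phi> ` G)" .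
  qed
  then show "\<exists>G. finite G \<and> G \<subseteq> J \<and> J \<subseteq> ideal_span (\<phi> ` Q) G"
    using G(1,2) by (intro exI[of _ "\<phi> ` G"]) (auto simp: I_def)
qed

section \<open>Polynomial functions in finitely many coordinates\<close>

inductive polyfun_vars :: "'n set \<Rightarrow> (real ^ 'n \<Rightarrow> real) \<Rightarrow> bool" for S :: "'n set" where
  pv_const: "polyfun_vars S (\<lambda>x. c)"
| pv_coord: "i \<in> S \<Longrightarrow> polyfun_vars S (\<lambda>x. x $ i)"
| pv_add: "polyfun_vars S p \<Longrightarrow> polyfun_vars S q \<Longrightarrow> polyfun_vars S (\<lambda>x. p x + q x)"
| pv_mult: "polyfun_vars S p \<Longrightarrow> polyfun_vars S q \<Longrightarrow> polyfun_vars S (\<lambda>x. p x * q x)"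

lemma polyfun_iff_polyfun_vars_UNIV: "polyfun p \<longleftrightarrow> polyfun_vars UNIV p"
proof
  show "polyfun p \<Longrightarrow> polyfun_vars UNIV p"
    by (induction rule: polyfun.induct) (auto intro: polyfun_vars.intros)
  show "polyfun_vars UNIV p \<Longrightarrow> polyfun p"
    by (induction rule: polyfun_vars.induct) (auto intro: polyfun.intros)
qed

lemma polyfun_vars_mono: "polyfun_vars S p \<Longrightarrow> S \<subseteq> T \<Longrightarrow> polyfun_vars T p"
  by (induction rule: polyfun_vars.induct) (auto intro: polyfun_vars.intros)

lemma is_subring_polyfun_vars: "is_subring (Collect (polyfun_vars S))"
proof -
  have "polyfun_vars S (\<lambda>x. p x - q x)" if "polyfun_vars S p" "polyfun_vars S q" for p q
    using pv_add[OF that(1) pv_mult[OF pv_const[of S "- 1"] that(2)]] by simp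
  then show ?thesis
    unfolding is_subring_def zero_fun_def one_fun_def plus_fun_def times_fun_def fun_diff_def
    by (auto intro: polyfun_vars.intros)
qed

lemma polyfun_vars_empty: "polyfun_vars {} p \<Longrightarrow> \<exists>c. p = (\<lambda>x. c)"
  by (induction rule: polyfun_vars.induct) auto

lemma noetherian_polyfun_vars_empty: "noetherian (Collect (polyfun_vars {}))"
  unfolding noetherian_def
proof (intro allI impI)
  fix I assume I: "is_ideal (Collect (polyfun_vars {})) I"
  have const: "\<exists>b. y = (\<lambda>x. b)" if "y \<in> I" for y
    using I that polyfun_vars_empty unfolding is_ideal_def by blast
  show "\<exists>G. finite G \<and> G \<subseteq> I \<and> I \<subseteq> ideal_span (Collect (polyfun_vars {})) G"
  proof (cases "I \<subseteq> {0}")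
    case True
    have "I \<subseteq> ideal_span (Collect (polyfun_vars {})) {}" using True by (auto simp: ideal_span_def)
    then show ?thesis by blast
  next
    case False
    then obtain c where c: "c \<in> I" "c \<noteq> 0" by blast
    obtain a where a: "c = (\<lambda>x. a)" using const[OF c(1)] by blast
    with c(2) have "a \<noteq> 0" by (auto simp: zero_fun_def)
    have "y \<in> ideal_span (Collect (polyfun_vars {})) {c}" if y: "y \<in> I" for y
    proof -
      obtain b where "y = (\<lambda>x. b)" using const[OF y] by blast
      then have "y = (\<lambda>x. b / a) * c" using a \<open>a \<noteq> 0\<close> by (simp add: fun_eq_iff)
      then show ?thesis unfolding ideal_span_def
        by (intro CollectI exI[of _ "\<lambda>_ x. b / a"] conjI) (simp_all add: pv_const)
    qed
    then show ?thesis using c(1) by (intro exI[of _ "{c}"]) blast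
  qed
qed

lemma polyfun_vars_insert_poly:
  assumes "c \<in> poly_over (Collect (polyfun_vars S))"
  shows "polyfun_vars (insert a S) (poly c (\<lambda>x. x $ a))"
  using assms
proof (induction c rule: pCons_induct)
  case (pCons b c)
  have coeffs: "\<And>j. polyfun_vars S (coeff (pCons b c) j)" using pCons.prems by (simp add: poly_over_def)
  have "polyfun_vars S b" using coeffs[of 0] by simp
  moreover have "polyfun_vars S (coeff c j)" for j using coeffs[of "Suc j"] by simp
  then have "c \<in> poly_over (Collect (polyfun_vars S))" by (simp add: poly_over_def)
  ultimately have "polyfun_vars (insert a S) (\<lambda>x. b x + x $ a * poly c (\<lambda>x. x $ a) x)"
    using pCons.IH by (intro pv_add pv_mult pv_coord) (auto intro: polyfun_vars_mono)
  then show ?case by (simp add: plus_fun_def times_fun_def)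
qed (simp add: zero_fun_def pv_const)

lemma polyfun_vars_insert_imp_poly:
  assumes "polyfun_vars (insert a S) p"
  shows "p \<in> (\<lambda>c. poly c (\<lambda>x. x $ a)) ` poly_over (Collect (polyfun_vars S))"
    (is "p \<in> ?ev ` ?Q")
proof -
  have Q: "is_subring ?Q" by (rule is_subring_poly_over[OF is_subring_polyfun_vars])
  have mon: "monom c k \<in> ?Q" if "polyfun_vars S c" for c k
    using monom_in_poly_over[OF is_subring_polyfun_vars] that by blast
  show ?thesis
    using assms
  proof (induction rule: polyfun_vars.induct)
    case (pv_const k)
    have "(\<lambda>x. k) = ?ev (monom (\<lambda>x. k) 0)" by (simp add: poly_monom)
    then show ?case using mon[OF polyfun_vars.pv_const] by (rule image_eqI)
  next
    case (pv_coord i)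
    show ?case
    proof (cases "i = a")
      case True
      have "(\<lambda>x. x $ i) = ?ev (monom 1 1)" using True by (simp add: poly_monom)
      moreover have "monom 1 1 \<in> ?Q" using mon polyfun_vars.pv_const[of S 1] by (simp add: one_fun_def)
      ultimately show ?thesis by (rule image_eqI)
    next
      case False
      then have "i \<in> S" using pv_coord by simp
      have "(\<lambda>x. x $ i) = ?ev (monom (\<lambda>x. x $ i) 0)" by (simp add: poly_monom)
      then show ?thesis using mon[OF polyfun_vars.pv_coord[OF \<open>i \<in> S\<close>]] by (rule image_eqI)
    qed
  next
    case (pv_add p q)
    then obtain c d where cd: "c \<in> ?Q" "d \<in> ?Q" "p = ?ev c" "q = ?ev d" by blast
    then have "(\<lambda>x. p x + q x) = ?ev (c + d)" by (simp add: plus_fun_def)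
    moreover have "c + d \<in> ?Q" using Q cd(1,2) unfolding is_subring_def by blast
    ultimately show ?case by (rule image_eqI)
  next
    case (pv_mult p q)
    then obtain c d where cd: "c \<in> ?Q" "d \<in> ?Q" "p = ?ev c" "q = ?ev d" by blast
    then have "(\<lambda>x. p x * q x) = ?ev (c * d)" by (simp add: times_fun_def)
    moreover have "c * d \<in> ?Q" using Q cd(1,2) unfolding is_subring_def by blast
    ultimately show ?case by (rule image_eqI)
  qed
qed

lemma polyfun_vars_insert:
  "Collect (polyfun_vars (insert a S)) = (\<lambda>c. poly c (\<lambda>x. x $ a)) ` poly_over (Collect (polyfun_vars S))"
  using polyfun_vars_insert_poly polyfun_vars_insert_imp_poly by blast

lemma noetherian_polyfun_vars: "finite S \<Longrightarrow> noetherian (Collect (polyfun_vars S))"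
proof (induction S rule: finite_induct)
  case empty
  show ?case by (rule noetherian_polyfun_vars_empty)
next
  case (insert a S)
  show ?case
    unfolding polyfun_vars_insert
  proof (rule noetherian_image)
    show "is_subring (poly_over (Collect (polyfun_vars S)))"
      by (rule is_subring_poly_over[OF is_subring_polyfun_vars])
    show "noetherian (poly_over (Collect (polyfun_vars S)))"
      by (rule hilbert_basis[OF is_subring_polyfun_vars insert.IH])
    show "is_subring ((\<lambda>c. poly c (\<lambda>x. x $ a)) ` poly_over (Collect (polyfun_vars S)))"
      using is_subring_polyfun_vars[of "insert a S"] by (simp add: polyfun_vars_insert)
  qed (simp_all add: poly_add poly_mult)
qed

corollary noetherian_polyfun: "noetherian (Collect polyfun :: (real ^ 'n \<Rightarrow> real) set)"
  using noetherian_polyfun_vars[of "UNIV :: 'n set"] by (simp add: polyfun_iff_polyfun_vars_UNIV[abs_def])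

section \<open>Lie derivatives of polynomial functions\<close>

lemma polyfun_sum: "(\<And>j. j \<in> A \<Longrightarrow> polyfun (F j)) \<Longrightarrow> polyfun (\<lambda>x. \<Sum>j\<in>A. F j x)"
  by (induction A rule: infinite_finite_induct) (auto intro: polyfun.intros)

lemma polyfun_continuous_on: "polyfun p \<Longrightarrow> continuous_on S p"
  by (induction rule: polyfun.induct) (auto intro!: continuous_intros)

lemma polyfun_derivative_along:
  assumes f: "poly_vf f" and p: "polyfun p"
  shows "\<exists>D. (\<forall>x. (p has_derivative D x) (at x)) \<and> polyfun (\<lambda>x. D x (f x))"
  using p
proof (induction rule: polyfun.induct)
  case (pf_const c)
  show ?case by (intro exI[of _ "\<lambda>x h. 0"]) (auto intro: polyfun.pf_const)
next
  case (pf_coord i)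
  have "((\<lambda>x. x $ i) has_derivative (\<lambda>h. h $ i)) (at x)" for x :: "real ^ 'a"
    by (rule bounded_linear_imp_has_derivative[OF bounded_linear_vec_nth])
  moreover have "polyfun (\<lambda>x. f x $ i)" using f by (simp add: poly_vf_def)
  ultimately show ?case by (intro exI[of _ "\<lambda>x h. h $ i"]) auto
next
  case (pf_add p q)
  then obtain D E where "\<forall>x. (p has_derivative D x) (at x)" "polyfun (\<lambda>x. D x (f x))"
    "\<forall>x. (q has_derivative E x) (at x)" "polyfun (\<lambda>x. E x (f x))" by blast
  then show ?case
    by (intro exI[of _ "\<lambda>x h. D x h + E x h"] conjI allI has_derivative_add polyfun.pf_add) auto
next
  case (pf_mult p q)
  then obtain D E where "\<forall>x. (p has_derivative D x) (at x)" "polyfun (\<lambda>x. D x (f x))"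
    "\<forall>x. (q has_derivative E x) (at x)" "polyfun (\<lambda>x. E x (f x))" by blast
  then show ?case
    by (intro exI[of _ "\<lambda>x h. p x * E x h + D x h * q x"] conjI allI has_derivative_mult
        polyfun.pf_add polyfun.pf_mult pf_mult.hyps) auto
qed

lemma polyfun_has_derivative:
  assumes "polyfun p"
  shows "(p has_derivative frechet_derivative p (at x)) (at x)"
proof -
  have "poly_vf (\<lambda>x. x)" by (simp add: poly_vf_def pf_coord)
  then obtain D where "(p has_derivative D x) (at x)" using polyfun_derivative_along assms by blast
  then show ?thesis using frechet_derivative_works differentiableI by blast
qed

lemma polyfun_lie_deriv: "poly_vf f \<Longrightarrow> polyfun p \<Longrightarrow> polyfun (lie_deriv f p)"
proof -
  assume "poly_vf f" "polyfun p"
  then obtain D where D: "\<forall>x. (p has_derivative D x) (at x)" "polyfun (\<lambda>x. D x (f x))"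
    using polyfun_derivative_along by blast
  have "lie_deriv f p = (\<lambda>x. D x (f x))"
    by (simp add: lie_deriv_def frechet_derivative_at[OF D(1)[rule_format], symmetric])
  then show ?thesis using D(2) by simp
qed

lemma lie_iter_0 [simp]: "lie_iter f 0 B = B"
  by (simp add: lie_iter_def)

lemma lie_iter_Suc: "lie_iter f (Suc k) B = lie_deriv f (lie_iter f k B)"
  by (simp add: lie_iter_def)

lemma polyfun_lie_iter: "poly_vf f \<Longrightarrow> polyfun B \<Longrightarrow> polyfun (lie_iter f k B)"
  by (induction k) (simp_all add: lie_iter_Suc polyfun_lie_deriv)

lemma lie_deriv_along_solution:
  assumes p: "polyfun p" and z: "(z has_vector_derivative f (z t)) (at t within S)"
  shows "((\<lambda>t. p (z t)) has_real_derivative lie_deriv f p (z t)) (at t within S)"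
proof -
  let ?D = "frechet_derivative p (at (z t))"
  have pd: "(p has_derivative ?D) (at (z t))" by (rule polyfun_has_derivative[OF p])
  have "(p \<circ> z has_derivative ?D \<circ> (\<lambda>h. h *\<^sub>R f (z t))) (at t within S)"
    using z by (intro diff_chain_within has_derivative_at_withinI[OF pd]) (simp add: has_vector_derivative_def)
  moreover have "?D \<circ> (\<lambda>h. h *\<^sub>R f (z t)) = (*) (?D (f (z t)))"
    using linear_cmul[OF has_derivative_linear[OF pd]] by (auto simp: fun_eq_iff)
  ultimately show ?thesis
    by (simp add: has_field_derivative_def lie_deriv_def o_def)
qed

section \<open>The completeness threshold\<close>

lemma is_ideal_in_poly_ideal:
  fixes L :: "nat \<Rightarrow> real ^ 'n \<Rightarrow> real"
  assumes L: "\<And>j. polyfun (L j)"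
  shows "is_ideal (Collect polyfun) {p. in_poly_ideal p L m}"
  unfolding is_ideal_def
proof (intro conjI ballI subsetI)
  fix p assume "p \<in> {p. in_poly_ideal p L m}"
  then obtain h where "\<forall>j\<le>m. polyfun (h j)" "\<forall>x. p x = (\<Sum>j\<le>m. h j x * L j x)"
    by (auto simp: in_poly_ideal_def)
  then have "p = (\<lambda>x. \<Sum>j\<le>m. h j x * L j x)" by auto
  then show "p \<in> Collect polyfun"
    using \<open>\<forall>j\<le>m. polyfun (h j)\<close> L by (auto intro!: polyfun_sum pf_mult)
next
  show "0 \<in> {p. in_poly_ideal p L m}"
    by (auto simp: in_poly_ideal_def intro!: exI[of _ "\<lambda>_ _. 0"] pf_const)
next
  fix p q assume "p \<in> {p. in_poly_ideal p L m}" "q \<in> {p. in_poly_ideal p L m}"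
  then obtain h k where "\<forall>j\<le>m. polyfun (h j)" "\<forall>x. p x = (\<Sum>j\<le>m. h j x * L j x)"
      "\<forall>j\<le>m. polyfun (k j)" "\<forall>x. q x = (\<Sum>j\<le>m. k j x * L j x)"
    by (auto simp: in_poly_ideal_def)
  then show "p + q \<in> {p. in_poly_ideal p L m}"
    by (auto simp: in_poly_ideal_def sum.distrib distrib_right
        intro!: exI[of _ "\<lambda>j x. h j x + k j x"] pf_add)
next
  fix r p :: "real ^ 'n \<Rightarrow> real"
  assume "r \<in> Collect polyfun" "p \<in> {p. in_poly_ideal p L m}"
  then obtain h where "\<forall>j\<le>m. polyfun (h j)" "\<forall>x. p x = (\<Sum>j\<le>m. h j x * L j x)"
    by (auto simp: in_poly_ideal_def)
  then show "r * p \<in> {p. in_poly_ideal p L m}"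
    using \<open>r \<in> Collect polyfun\<close>
    by (auto simp: in_poly_ideal_def sum_distrib_left mult.assoc intro!: exI[of _ "\<lambda>j x. r x * h j x"] pf_mult)
qed

lemma in_poly_ideal_mono:
  assumes "in_poly_ideal p L m" "m \<le> m'"
  shows "in_poly_ideal p L m'"
proof -
  obtain h where h: "\<forall>j\<le>m. polyfun (h j)" "\<forall>x. p x = (\<Sum>j\<le>m. h j x * L j x)"
    using assms(1) by (auto simp: in_poly_ideal_def)
  define h' where "h' j = (if j \<le> m then h j else (\<lambda>x. 0))" for j
  have "(\<Sum>j\<le>m'. h' j x * L j x) = (\<Sum>j\<le>m. h j x * L j x)" for x
    using assms(2) by (intro sum.mono_neutral_cong_right) (auto simp: h'_def)
  moreover have "\<forall>j\<le>m'. polyfun (h' j)" using h(1) by (simp add: h'_def pf_const)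
  ultimately show ?thesis using h(2) unfolding in_poly_ideal_def by metis
qed

lemma in_poly_ideal_generator: "in_poly_ideal (L m) L m"
proof -
  have "(\<Sum>j\<le>m. (if j = m then 1 else 0) * L j x) = (\<Sum>j\<le>m. if j = m then L j x else 0)" for x
    by (rule sum.cong) auto
  then have "(\<Sum>j\<le>m. (if j = m then 1 else 0) * L j x) = L m x" for x
    by simp
  then show ?thesis unfolding in_poly_ideal_def
    by (intro exI[of _ "\<lambda>j x. if j = m then 1 else 0"]) (simp add: pf_const)
qed

text \<open>Hilbert's basis theorem makes the chain of ideals generated by \<open>L 0, \<dots>, L m\<close> stationary.\<close>

lemma ex_in_poly_ideal_of_predecessors:
  fixes L :: "nat \<Rightarrow> real ^ 'n \<Rightarrow> real"
  assumes "\<And>k. polyfun (L k)"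
  shows "\<exists>i\<ge>1. in_poly_ideal (L (Suc i)) L i"
proof -
  obtain D where D: "\<And>d. D \<le> d \<Longrightarrow> {p. in_poly_ideal p L d} \<subseteq> {p. in_poly_ideal p L D}"
    using noetherian_chain_stabilizes[of _ "\<lambda>m. {p. in_poly_ideal p L m}", OF noetherian_polyfun
        is_ideal_in_poly_ideal[OF assms]] in_poly_ideal_mono by blast
  define i where "i = max D 1"
  have "L (Suc i) \<in> {p. in_poly_ideal p L (Suc i)}" by (simp add: in_poly_ideal_generator)
  moreover have "D \<le> Suc i" by (simp add: i_def)
  ultimately have "in_poly_ideal (L (Suc i)) L D" using D by blast
  then have "in_poly_ideal (L (Suc i)) L i" by (rule in_poly_ideal_mono) (simp add: i_def)
  then show ?thesis by (intro exI[of _ i]) (simp add: i_def)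
qed

lemma compl_threshold_in_poly_ideal:
  assumes "poly_vf f" "polyfun B"
  shows "in_poly_ideal (lie_iter f (Suc (compl_threshold B f)) B) (\<lambda>j. lie_iter f j B) (compl_threshold B f)"
proof -
  have "\<exists>i. 1 \<le> i \<and> in_poly_ideal (lie_iter f (Suc i) B) (\<lambda>j. lie_iter f j B) i"
    using ex_in_poly_ideal_of_predecessors[of "\<lambda>j. lie_iter f j B"] polyfun_lie_iter[OF assms] by blast
  from LeastI_ex[OF this] show ?thesis unfolding compl_threshold_def by blast
qed

section \<open>Lipschitz continuity and local solutions\<close>

lemma lipschitz_on_mult:
  fixes p q :: "'a::metric_space \<Rightarrow> real"
  assumes p: "A-lipschitz_on U p" "\<And>x. x \<in> U \<Longrightarrow> \<bar>p x\<bar> \<le> P"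
    and q: "B-lipschitz_on U q" "\<And>x. x \<in> U \<Longrightarrow> \<bar>q x\<bar> \<le> Q"
    and PQ: "0 \<le> P" "0 \<le> Q"
  shows "(P * B + A * Q)-lipschitz_on U (\<lambda>x. p x * q x)"
proof (rule lipschitz_onI)
  show "0 \<le> P * B + A * Q"
    using assms lipschitz_on_nonneg[OF p(1)] lipschitz_on_nonneg[OF q(1)] by simp
  fix x y assume xy: "x \<in> U" "y \<in> U"
  have "dist (p x * q x) (p y * q y) = \<bar>p x * (q x - q y) + (p x - p y) * q y\<bar>"
    by (simp add: dist_real_def algebra_simps)
  also have "\<dots> \<le> \<bar>p x\<bar> * \<bar>q x - q y\<bar> + \<bar>p x - p y\<bar> * \<bar>q y\<bar>"
    by (metis abs_mult abs_triangle_ineq)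
  also have "\<dots> \<le> P * (B * dist x y) + (A * dist x y) * Q"
    using xy p q PQ lipschitz_onD[OF p(1) xy] lipschitz_onD[OF q(1) xy] lipschitz_on_nonneg[OF p(1)]
    by (intro add_mono mult_mono) (auto simp: dist_real_def)
  finally show "dist (p x * q x) (p y * q y) \<le> (P * B + A * Q) * dist x y"
    by (simp add: algebra_simps)
qed

lemma polyfun_lipschitz_on_compact:
  assumes "polyfun p" "compact U"
  shows "\<exists>L. L-lipschitz_on U p"
  using assms(1)
proof (induction rule: polyfun.induct)
  case (pf_const c)
  then show ?case using lipschitz_on_constant by blast
next
  case (pf_coord i)
  have "1-lipschitz_on U (\<lambda>x. x $ i)"
    by (rule lipschitz_onI) (auto simp: dist_real_def dist_norm intro: order.trans[OF _ component_le_norm_cart])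
  then show ?case by blast
next
  case (pf_add p q)
  then show ?case using lipschitz_on_add by blast
next
  case (pf_mult p q)
  have "bounded (p ` U)" "bounded (q ` U)"
    using pf_mult.hyps assms(2) by (auto intro!: compact_imp_bounded compact_continuous_image polyfun_continuous_on)
  then obtain P Q where "0 < P" "\<forall>y\<in>p ` U. norm y \<le> P" "0 < Q" "\<forall>y\<in>q ` U. norm y \<le> Q"
    unfolding bounded_pos by blast
  then have "\<And>x. x \<in> U \<Longrightarrow> \<bar>p x\<bar> \<le> P" "\<And>x. x \<in> U \<Longrightarrow> \<bar>q x\<bar> \<le> Q" "0 \<le> P" "0 \<le> Q"
    by auto
  then show ?case using pf_mult.IH lipschitz_on_mult by blast
qed

lemma poly_vf_lipschitz_on_compact:
  fixes f :: "real ^ 'n \<Rightarrow> real ^ 'n"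
  assumes "poly_vf f" "compact U"
  shows "\<exists>L. L-lipschitz_on U f"
proof -
  have "\<forall>i. \<exists>L. L-lipschitz_on U (\<lambda>x. f x $ i)"
    using polyfun_lipschitz_on_compact assms unfolding poly_vf_def by blast
  then obtain L where L: "\<And>i. (L i)-lipschitz_on U (\<lambda>x. f x $ i)"
    by (metis choice)
  have "(\<Sum>i\<in>UNIV. L i)-lipschitz_on U f"
  proof (rule lipschitz_onI)
    fix x y assume xy: "x \<in> U" "y \<in> U"
    have "dist (f x) (f y) \<le> (\<Sum>i\<in>UNIV. \<bar>(f x - f y) $ i\<bar>)"
      unfolding dist_norm by (rule norm_le_l1_cart)
    also have "\<dots> \<le> (\<Sum>i\<in>UNIV. L i * dist x y)"
      using lipschitz_onD[OF L xy] by (intro sum_mono) (simp add: dist_real_def)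
    finally show "dist (f x) (f y) \<le> (\<Sum>i\<in>UNIV. L i) * dist x y"
      by (simp add: sum_distrib_right)
  qed (use lipschitz_on_nonneg[OF L] in \<open>simp add: sum_nonneg\<close>)
  then show ?thesis by blast
qed

lemma norm_integral_le_const:
  fixes g :: "real \<Rightarrow> 'a::banach"
  assumes "continuous_on {0..t} g" "0 \<le> t" "\<And>s. s \<in> {0..t} \<Longrightarrow> norm (g s) \<le> K"
  shows "norm (integral {0..t} g) \<le> K * t"
proof -
  have "norm (g 0) \<le> K" using assms(2,3) by simp
  then have "0 \<le> K" by (meson norm_ge_zero order_trans)
  have "(g has_integral integral {0..t} g) {0..t}"
    using integrable_continuous_interval[OF assms(1)] by (rule integrable_integral)
  then have "norm (integral {0..t} g) \<le> K * Henstock_Kurzweil_Integration.content {0..t}"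
    by (rule has_integral_bound_real[OF \<open>0 \<le> K\<close> finite.emptyI]) (use assms(3) in auto)
  then show ?thesis using assms(2) by simp
qed

lemma norm_le_of_lipschitz_on_cball:
  assumes lip: "L-lipschitz_on (cball x0 r) f" and y: "y \<in> cball x0 r"
  shows "norm (f y) \<le> norm (f x0) + L * r"
proof -
  have "x0 \<in> cball x0 r" using y by (auto intro: order_trans[OF zero_le_dist])
  then have "dist (f y) (f x0) \<le> L * dist y x0" by (rule lipschitz_onD[OF lip y])
  also have "\<dots> \<le> L * r" using y lipschitz_on_nonneg[OF lip] by (intro mult_left_mono) (auto simp: dist_commute)
  finally show ?thesis using norm_triangle_sub[of "f y" "f x0"] by (simp add: dist_norm)
qed

lemma apply_Bcontfun_clamp:
  fixes g :: "real \<Rightarrow> 'a::metric_space"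
  assumes "continuous_on {a..b} g"
  shows "apply_bcontfun (Bcontfun (\<lambda>t. g (clamp a b t))) = (\<lambda>t. g (clamp a b t))"
proof -
  have "continuous_on (cbox a b) g" using assms by (simp add: cbox_interval)
  moreover from this have "bounded (g ` cbox a b)"
    by (intro compact_imp_bounded compact_continuous_image) auto
  ultimately have "(\<lambda>t. g (clamp a b t)) \<in> bcontfun"
    unfolding bcontfun_def by (auto intro: clamp_continuous_on clamp_bounded)
  then show ?thesis by (simp add: Bcontfun_inverse)
qed

text \<open>Clamping the time to \<open>[0, \<delta>]\<close> makes the Picard operator act on bounded continuous functions
  on the whole line.\<close>

definition picard_step :: "('a::banach \<Rightarrow> 'a) \<Rightarrow> 'a \<Rightarrow> real \<Rightarrow> (real \<Rightarrow>\<^sub>C 'a) \<Rightarrow> real \<Rightarrow>\<^sub>C 'a" where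
  "picard_step f x0 \<delta> u = Bcontfun (\<lambda>t. x0 + integral {0..clamp 0 \<delta> t} (\<lambda>s. f (u s)))"

lemma apply_picard_step:
  fixes f :: "'a::banach \<Rightarrow> 'a" and u :: "real \<Rightarrow>\<^sub>C 'a"
  assumes f: "continuous_on (cball x0 r) f" and u: "\<forall>s. u s \<in> cball x0 r"
  shows "picard_step f x0 \<delta> u t = x0 + integral {0..clamp 0 \<delta> t} (\<lambda>s. f (u s))"
proof -
  have "continuous_on {0..\<delta>} (\<lambda>s. f (u s))"
    using u by (intro continuous_on_compose2[OF f]) auto
  then have "continuous_on {0..\<delta>} (\<lambda>t. x0 + integral {0..t} (\<lambda>s. f (u s)))"
    by (intro continuous_intros indefinite_integral_continuous_1 integrable_continuous_interval)
  from apply_Bcontfun_clamp[OF this] show ?thesis by (simp add: picard_step_def)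
qed

lemma clamp_in_Icc: "0 \<le> \<delta> \<Longrightarrow> clamp 0 \<delta> t \<in> {0..\<delta>}"
  for \<delta> t :: real
  using clamp_in_interval[of 0 \<delta> t] by simp

lemma picard_step_in_cball:
  fixes f :: "'a::banach \<Rightarrow> 'a" and u :: "real \<Rightarrow>\<^sub>C 'a"
  assumes lip: "L-lipschitz_on (cball x0 r) f" and M: "\<And>y. y \<in> cball x0 r \<Longrightarrow> norm (f y) \<le> M"
    and \<delta>: "0 \<le> \<delta>" "M * \<delta> \<le> r" and u: "\<forall>s. u s \<in> cball x0 r"
  shows "picard_step f x0 \<delta> u t \<in> cball x0 r"
proof -
  define c where "c = clamp 0 \<delta> t"
  have c: "c \<in> {0..\<delta>}" using clamp_in_Icc[OF \<delta>(1)] by (simp add: c_def)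
  have "0 \<le> M" using M[of "u 0"] u norm_ge_zero order_trans by blast
  have "continuous_on {0..c} (\<lambda>s. f (u s))"
    using u by (intro continuous_on_compose2[OF lipschitz_on_continuous_on[OF lip]]) auto
  then have "norm (integral {0..c} (\<lambda>s. f (u s))) \<le> M * c"
    by (rule norm_integral_le_const) (use c M u in auto)
  also have "\<dots> \<le> M * \<delta>" using c \<open>0 \<le> M\<close> by (simp add: mult_left_mono)
  finally show ?thesis
    using \<delta>(2) apply_picard_step[OF lipschitz_on_continuous_on[OF lip] u] by (simp add: c_def dist_norm)
qed

lemma picard_step_contraction:
  fixes f :: "'a::banach \<Rightarrow> 'a" and u v :: "real \<Rightarrow>\<^sub>C 'a"
  assumes lip: "L-lipschitz_on (cball x0 r) f" and \<delta>: "0 \<le> \<delta>" "L * \<delta> \<le> 1 / 2"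
    and u: "\<forall>s. u s \<in> cball x0 r" and v: "\<forall>s. v s \<in> cball x0 r"
  shows "dist (picard_step f x0 \<delta> u) (picard_step f x0 \<delta> v) \<le> 1 / 2 * dist u v"
proof (rule dist_bound)
  fix t
  define c where "c = clamp 0 \<delta> t"
  have c: "c \<in> {0..\<delta>}" using clamp_in_Icc[OF \<delta>(1)] by (simp add: c_def)
  have fcont: "continuous_on (cball x0 r) f" by (rule lipschitz_on_continuous_on[OF lip])
  have cont: "continuous_on {0..c} (\<lambda>s. f (w s))" if "\<forall>s. w s \<in> cball x0 r" for w :: "real \<Rightarrow>\<^sub>C 'a"
    using that by (intro continuous_on_compose2[OF fcont]) auto
  have "dist (picard_step f x0 \<delta> u t) (picard_step f x0 \<delta> v t)
      = norm (integral {0..c} (\<lambda>s. f (u s) - f (v s)))"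
    using apply_picard_step[OF fcont u] apply_picard_step[OF fcont v] cont[OF u] cont[OF v]
    by (simp add: c_def dist_norm integral_diff integrable_continuous_interval)
  also have "\<dots> \<le> L * dist u v * c"
  proof (rule norm_integral_le_const[OF continuous_on_diff[OF cont[OF u] cont[OF v]]])
    fix s
    have "norm (f (u s) - f (v s)) \<le> L * dist (u s) (v s)"
      using lipschitz_onD[OF lip] u v by (simp add: dist_norm)
    also have "\<dots> \<le> L * dist u v" using lipschitz_on_nonneg[OF lip] by (intro mult_left_mono dist_bounded)
    finally show "norm (f (u s) - f (v s)) \<le> L * dist u v" .
  qed (use c in simp)
  also have "\<dots> \<le> L * dist u v * \<delta>" using c lipschitz_on_nonneg[OF lip] by (intro mult_left_mono) auto
  also have "\<dots> = (L * \<delta>) * dist u v" by simp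
  also have "\<dots> \<le> 1 / 2 * dist u v" using \<delta>(2) by (intro mult_right_mono) auto
  finally show "dist (picard_step f x0 \<delta> u t) (picard_step f x0 \<delta> v t) \<le> 1 / 2 * dist u v" .
qed

lemma picard_fixed_point:
  fixes f :: "'a::banach \<Rightarrow> 'a"
  assumes lip: "L-lipschitz_on (cball x0 r) f" and M: "\<And>y. y \<in> cball x0 r \<Longrightarrow> norm (f y) \<le> M"
    and "0 \<le> r" and \<delta>: "0 \<le> \<delta>" "M * \<delta> \<le> r" "L * \<delta> \<le> 1 / 2"
  shows "\<exists>u :: real \<Rightarrow>\<^sub>C 'a. (\<forall>s. u s \<in> cball x0 r) \<and> (\<forall>t\<in>{0..\<delta>}. u t = x0 + integral {0..t} (\<lambda>s. f (u s)))"
proof -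
  define X :: "(real \<Rightarrow>\<^sub>C 'a) set" where "X = PiC UNIV (\<lambda>_. cball x0 r)"
  have X: "u \<in> X \<longleftrightarrow> (\<forall>s. u s \<in> cball x0 r)" for u
    by (auto simp: X_def mem_PiC_iff)
  have "\<exists>!u\<in>X. picard_step f x0 \<delta> u = u"
  proof (rule Banach_fix)
    show "complete X" unfolding X_def by (simp add: complete_eq_closed closed_PiC)
    show "X \<noteq> {}" using X[of "const_bcontfun x0"] \<open>0 \<le> r\<close> by (auto simp: const_bcontfun.rep_eq)
    show "picard_step f x0 \<delta> ` X \<subseteq> X"
      using picard_step_in_cball[OF lip M \<delta>(1,2)] X by blast
    show "dist (picard_step f x0 \<delta> u) (picard_step f x0 \<delta> v) \<le> 1 / 2 * dist u v" if "u \<in> X" "v \<in> X" for u v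
      using picard_step_contraction[OF lip \<delta>(1,3)] that X by blast
  qed auto
  then obtain u :: "real \<Rightarrow>\<^sub>C 'a" where u: "\<forall>s. u s \<in> cball x0 r" "picard_step f x0 \<delta> u = u"
    using X by blast
  have "u t = x0 + integral {0..t} (\<lambda>s. f (u s))" if "t \<in> {0..\<delta>}" for t
    using apply_picard_step[OF lipschitz_on_continuous_on[OF lip] u(1), of \<delta> t] u(2) that
    by (simp add: cbox_interval)
  then show ?thesis using u(1) by blast
qed

lemma local_solution_exists:
  fixes f :: "'a::banach \<Rightarrow> 'a"
  assumes lip: "L-lipschitz_on (cball x0 r) f" and r: "0 < r"
  shows "\<exists>\<delta>>0. \<exists>z. z 0 = x0 \<and> (\<forall>t\<in>{0..<\<delta>}. (z has_vector_derivative f (z t)) (at t within {0..<\<delta>}))"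
proof -
  define M where "M = norm (f x0) + L * r"
  have L: "0 \<le> L" by (rule lipschitz_on_nonneg[OF lip])
  then have "0 \<le> M" using r by (simp add: M_def)
  define \<delta> where "\<delta> = min (r / (M + 1)) (1 / (2 * (L + 1)))"
  have \<delta>: "0 < \<delta>" "M * \<delta> \<le> r" "L * \<delta> \<le> 1 / 2"
  proof -
    show "0 < \<delta>" using r \<open>0 \<le> M\<close> L by (simp add: \<delta>_def)
    have "M * \<delta> \<le> M * (r / (M + 1))" using \<open>0 \<le> M\<close> by (intro mult_left_mono) (simp_all add: \<delta>_def)
    also have "\<dots> \<le> r" using \<open>0 \<le> M\<close> r by (simp add: field_simps)
    finally show "M * \<delta> \<le> r" .
    have "L * \<delta> \<le> L * (1 / (2 * (L + 1)))" using L by (intro mult_left_mono) (simp_all add: \<delta>_def)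
    also have "\<dots> \<le> 1 / 2" using L by (simp add: field_simps)
    finally show "L * \<delta> \<le> 1 / 2" .
  qed
  have "norm (f y) \<le> M" if "y \<in> cball x0 r" for y
    unfolding M_def by (rule norm_le_of_lipschitz_on_cball[OF lip that])
  then obtain u :: "real \<Rightarrow>\<^sub>C 'a" where u: "\<forall>s. u s \<in> cball x0 r"
    and fix_u: "\<forall>t\<in>{0..\<delta>}. u t = x0 + integral {0..t} (\<lambda>s. f (u s))"
    using picard_fixed_point[OF lip _ _ less_imp_le[OF \<delta>(1)] \<delta>(2,3)] r by (metis less_imp_le)
  have cont: "continuous_on {0..\<delta>} (\<lambda>s. f (u s))"
    using u by (intro continuous_on_compose2[OF lipschitz_on_continuous_on[OF lip]]) auto
  have D: "((\<lambda>t. x0 + integral {0..t} (\<lambda>s. f (u s))) has_vector_derivative f (u t))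
      (at t within {0..\<delta>})" if "t \<in> {0..\<delta>}" for t
    using has_vector_derivative_add[OF has_vector_derivative_const integral_has_vector_derivative[OF cont that]]
    by simp
  have "(u has_vector_derivative f (u t)) (at t within {0..\<delta>})" if t: "t \<in> {0..\<delta>}" for t
  proof (rule has_vector_derivative_transform[OF t _ D[OF t]])
    show "u x = x0 + integral {0..x} (\<lambda>s. f (u s))" if "x \<in> {0..\<delta>}" for x
      using fix_u that by blast
  qed
  then have "(u has_vector_derivative f (u t)) (at t within {0..<\<delta>})" if "t \<in> {0..<\<delta>}" for t
    by (rule has_vector_derivative_within_subset) (use that in auto)
  moreover have "u 0 = x0" using fix_u[rule_format, of 0] \<delta>(1) by simp
  ultimately show ?thesis using \<delta>(1) by blast
qed

section \<open>Sign of a function right after a point\<close>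

lemma mvt_within_Icc:
  fixes g g' :: "real \<Rightarrow> real"
  assumes der: "\<And>x. x \<in> {s..b} \<Longrightarrow> (g has_real_derivative g' x) (at x within {s..b})"
    and "s < t" "t \<le> b"
  shows "\<exists>x\<in>{s<..<t}. g t - g s = g' x * (t - s)"
proof -
  have "(g has_derivative (*) (g' x)) (at x within {s..t})" if "s \<le> x" "x \<le> t" for x
    using DERIV_subset[OF der] that assms(3) by (simp add: has_field_derivative_def)
  then show ?thesis using mvt_simple[of s t g "\<lambda>x. (*) (g' x)"] \<open>s < t\<close> by auto
qed

lemma abs_le_of_derivative_bound:
  fixes g g' :: "real \<Rightarrow> real"
  assumes der: "\<And>x. x \<in> {s..b} \<Longrightarrow> (g has_real_derivative g' x) (at x within {s..b})"
    and "g s = 0" and bound: "\<And>x. x \<in> {s..b} \<Longrightarrow> \<bar>g' x\<bar> \<le> C" and t: "t \<in> {s..b}"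
  shows "\<bar>g t\<bar> \<le> C * (t - s)"
proof (cases "t = s")
  case False
  then obtain x where "x \<in> {s<..<t}" "g t - g s = g' x * (t - s)"
    using mvt_within_Icc[OF der] t by force
  then show ?thesis
    using \<open>g s = 0\<close> bound[of x] t by (simp add: abs_mult mult_right_mono)
qed (use \<open>g s = 0\<close> in simp)

lemma eventually_neg_at_right_of_first_nonzero_derivative:
  fixes g :: "nat \<Rightarrow> real \<Rightarrow> real"
  assumes "s < b"
    and der: "\<And>k t. k < i \<Longrightarrow> t \<in> {s..b} \<Longrightarrow> (g k has_real_derivative g (Suc k) t) (at t within {s..b})"
    and cont: "continuous_on {s..b} (g i)"
    and zero: "\<And>k. k < i \<Longrightarrow> g k s = 0" and neg: "g i s < 0"
  shows "\<forall>\<^sub>F t in at_right s. g 0 t < 0"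
proof -
  have "\<forall>\<^sub>F t in at_right s. g (i - k) t < 0" if "k \<le> i" for k
    using that
  proof (induction k)
    case 0
    have "(g i \<longlongrightarrow> g i s) (at_right s)"
      using cont \<open>s < b\<close> by (simp add: continuous_on_Icc_at_rightD)
    then show ?case using neg by (simp add: order_tendstoD(2))
  next
    case (Suc k)
    define j where "j = i - Suc k"
    have j: "j < i" "Suc j = i - k" using Suc.prems by (auto simp: j_def)
    obtain e where e: "e > s" "\<And>t. s < t \<Longrightarrow> t < e \<Longrightarrow> g (Suc j) t < 0"
      using Suc.IH Suc.prems j(2) by (auto simp: eventually_at_right_field)
    have dj: "\<And>x. x \<in> {s..b} \<Longrightarrow> (g j has_real_derivative g (Suc j) x) (at x within {s..b})"
      using der[OF j(1)] .
    have "g j t < 0" if t: "s < t" "t < min e b" for t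
    proof -
      obtain x where "x \<in> {s<..<t}" "g j t - g j s = g (Suc j) x * (t - s)"
        using mvt_within_Icc[OF dj, of t] t by auto
      then show ?thesis using e(2)[of x] zero[OF j(1)] t by (simp add: mult_neg_pos)
    qed
    then show ?case
      unfolding eventually_at_right_field j_def[symmetric] using e(1) \<open>s < b\<close>
      by (intro exI[of _ "min e b"]) auto
  qed
  from this[of i] show ?thesis by simp
qed

lemma abs_next_le_of_linear_chain:
  fixes g c :: "nat \<Rightarrow> real \<Rightarrow> real"
  assumes lin: "g (Suc N) t = (\<Sum>j\<le>N. c j t * g j t)" and bnd: "\<And>j. j \<le> N \<Longrightarrow> \<bar>c j t\<bar> \<le> M"
    and "0 \<le> M" and "k \<le> N"
  shows "\<bar>g (Suc k) t\<bar> \<le> (M + 1) * (\<Sum>j\<le>N. \<bar>g j t\<bar>)"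
proof (cases "k < N")
  case True
  then have "\<bar>g (Suc k) t\<bar> \<le> (\<Sum>j\<le>N. \<bar>g j t\<bar>)"
    by (intro member_le_sum[of "Suc k" "{..N}" "\<lambda>j. \<bar>g j t\<bar>"]) auto
  moreover have "0 \<le> M * (\<Sum>j\<le>N. \<bar>g j t\<bar>)" using \<open>0 \<le> M\<close> by (simp add: sum_nonneg)
  ultimately show ?thesis by (simp add: algebra_simps)
next
  case False
  then have "k = N" using \<open>k \<le> N\<close> by simp
  have "\<bar>g (Suc N) t\<bar> \<le> (\<Sum>j\<le>N. \<bar>c j t\<bar> * \<bar>g j t\<bar>)"
    unfolding lin abs_mult[symmetric] by (rule sum_abs)
  also have "\<dots> \<le> (\<Sum>j\<le>N. M * \<bar>g j t\<bar>)"
    using bnd by (intro sum_mono mult_right_mono) auto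
  also have "\<dots> \<le> (M + 1) * (\<Sum>j\<le>N. \<bar>g j t\<bar>)"
    by (simp add: sum_distrib_left[symmetric] mult_right_mono sum_nonneg)
  finally show ?thesis using \<open>k = N\<close> by simp
qed

lemma eventually_zero_at_right_of_linear_derivative_chain:
  fixes g c :: "nat \<Rightarrow> real \<Rightarrow> real"
  assumes "s < b"
    and der: "\<And>k t. k \<le> N \<Longrightarrow> t \<in> {s..b} \<Longrightarrow> (g k has_real_derivative g (Suc k) t) (at t within {s..b})"
    and lin: "\<And>t. t \<in> {s..b} \<Longrightarrow> g (Suc N) t = (\<Sum>j\<le>N. c j t * g j t)"
    and bnd: "\<And>j t. j \<le> N \<Longrightarrow> t \<in> {s..b} \<Longrightarrow> \<bar>c j t\<bar> \<le> M"
    and zero: "\<And>k. k \<le> N \<Longrightarrow> g k s = 0"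
  shows "\<forall>\<^sub>F t in at_right s. g 0 t = 0"
proof -
  have "0 \<le> M" using bnd[of 0 s] \<open>s < b\<close> by auto
  define K where "K = (N + 1) * (M + 1)"
  have "0 < K" using \<open>0 \<le> M\<close> by (simp add: K_def)
  define h where "h = min (b - s) (1 / (2 * K))"
  have h: "0 < h" "s + h \<le> b" "K * h \<le> 1 / 2"
    using \<open>s < b\<close> \<open>0 < K\<close> by (auto simp: h_def min_def field_simps)
  define F where "F t = (\<Sum>k\<le>N. \<bar>g k t\<bar>)" for t
  have der_h: "(g k has_real_derivative g (Suc k) t) (at t within {s..s + h})"
    if "k \<le> N" "t \<in> {s..s + h}" for k t
    using DERIV_subset[OF der[OF that(1)], of t "{s..s + h}"] that(2) h(2) by auto
  then have "continuous_on {s..s + h} (g k)" if "k \<le> N" for k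
    using that by (intro DERIV_continuous_on) blast
  then have "continuous_on {s..s + h} F"
    unfolding F_def by (intro continuous_intros) auto
  then obtain t0 where t0: "t0 \<in> {s..s + h}" "\<And>t. t \<in> {s..s + h} \<Longrightarrow> F t \<le> F t0"
    using continuous_attains_sup[of "{s..s + h}" F] h(1) by auto
  define m where "m = F t0"
  have F_le: "\<bar>g k t\<bar> \<le> F t" if "k \<le> N" for k t
    unfolding F_def using that by (intro member_le_sum[of k "{..N}" "\<lambda>k. \<bar>g k t\<bar>"]) auto
  have "0 \<le> m" unfolding m_def F_def by (simp add: sum_nonneg)
  have deriv_le: "\<bar>g (Suc k) t\<bar> \<le> (M + 1) * m" if "k \<le> N" "t \<in> {s..s + h}" for k t
  proof -
    have "t \<in> {s..b}" using that(2) h(2) by simp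
    then have "\<bar>g (Suc k) t\<bar> \<le> (M + 1) * F t"
      unfolding F_def using lin bnd \<open>0 \<le> M\<close> that(1) by (intro abs_next_le_of_linear_chain) auto
    also have "\<dots> \<le> (M + 1) * m"
      using t0(2)[OF that(2)] \<open>0 \<le> M\<close> by (simp add: m_def)
    finally show ?thesis .
  qed
  have g_le: "\<bar>g k t\<bar> \<le> (M + 1) * m * h" if "k \<le> N" "t \<in> {s..s + h}" for k t
  proof -
    have "\<bar>g k t\<bar> \<le> (M + 1) * m * (t - s)"
      using der_h[OF that(1)] zero[OF that(1)] deriv_le[OF that(1)] that(2)
      by (rule abs_le_of_derivative_bound)
    also have "\<dots> \<le> (M + 1) * m * h"
      using that(2) \<open>0 \<le> M\<close> \<open>0 \<le> m\<close> by (intro mult_left_mono) auto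
    finally show ?thesis .
  qed
  have "m = (\<Sum>k\<le>N. \<bar>g k t0\<bar>)" by (simp add: m_def F_def)
  also have "\<dots> \<le> (\<Sum>k\<le>N. (M + 1) * m * h)"
    using g_le t0(1) by (intro sum_mono) auto
  also have "\<dots> = (K * h) * m" by (simp add: K_def algebra_simps)
  also have "\<dots> \<le> 1 / 2 * m" using h(3) \<open>0 \<le> m\<close> by (intro mult_right_mono)
  finally have "m = 0" using \<open>0 \<le> m\<close> by simp
  have "g 0 t = 0" if "s < t" "t < s + h" for t
    using F_le[of 0 t] t0(2)[of t] that \<open>m = 0\<close> unfolding m_def by (auto simp: F_def)
  then show ?thesis unfolding eventually_at_right_field using h(1) by (intro exI[of _ "s + h"]) auto
qed

lemma eventually_nonpos_at_right_of_derivative_chain: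
  fixes g c :: "nat \<Rightarrow> real \<Rightarrow> real"
  assumes "s < b"
    and der: "\<And>k t. k \<le> N \<Longrightarrow> t \<in> {s..b} \<Longrightarrow> (g k has_real_derivative g (Suc k) t) (at t within {s..b})"
    and lin: "\<And>t. t \<in> {s..b} \<Longrightarrow> g (Suc N) t = (\<Sum>j\<le>N. c j t * g j t)"
    and bnd: "\<And>j t. j \<le> N \<Longrightarrow> t \<in> {s..b} \<Longrightarrow> \<bar>c j t\<bar> \<le> M"
    and first: "\<And>i. i \<le> N \<Longrightarrow> (\<And>k. k < i \<Longrightarrow> g k s = 0) \<Longrightarrow> g i s \<le> 0"
  shows "\<forall>\<^sub>F t in at_right s. g 0 t \<le> 0"
proof (cases "\<exists>i\<le>N. g i s \<noteq> 0")
  case True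
  define i where "i = (LEAST i. g i s \<noteq> 0)"
  have i: "i \<le> N" "g i s \<noteq> 0" "\<And>k. k < i \<Longrightarrow> g k s = 0"
    using True LeastI_ex[of "\<lambda>i. g i s \<noteq> 0"] Least_le[of "\<lambda>i. g i s \<noteq> 0"] not_less_Least
    unfolding i_def by (blast intro: le_trans)+
  then have "g i s < 0" using first[of i] by force
  moreover have "continuous_on {s..b} (g i)"
    using der[OF i(1)] by (intro DERIV_continuous_on) auto
  ultimately have "\<forall>\<^sub>F t in at_right s. g 0 t < 0"
    using \<open>s < b\<close> der i(1,3) by (intro eventually_neg_at_right_of_first_nonzero_derivative) auto
  then show ?thesis by (rule eventually_mono) simp
next
  case False
  then have "\<forall>\<^sub>F t in at_right s. g 0 t = 0"
    by (intro eventually_zero_at_right_of_linear_derivative_chain[OF \<open>s < b\<close> der lin bnd]) auto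
  then show ?thesis by (rule eventually_mono) simp
qed

lemma nonpos_on_Icc_of_eventually_nonpos_at_right:
  fixes g :: "real \<Rightarrow> real"
  assumes cont: "continuous_on {a..b} g" and "g a \<le> 0"
    and step: "\<And>s. s \<in> {a..<b} \<Longrightarrow> g s \<le> 0 \<Longrightarrow> \<forall>\<^sub>F t in at_right s. g t \<le> 0"
    and t: "t \<in> {a..b}"
  shows "g t \<le> 0"
proof (rule ccontr)
  assume "\<not> g t \<le> 0"
  define A where "A = {a..t} \<inter> g -` {..0}"
  have "closed A"
    unfolding A_def using t by (intro continuous_closed_preimage continuous_on_subset[OF cont]) auto
  moreover have "a \<in> A" "bdd_above A" using \<open>g a \<le> 0\<close> t by (auto simp: A_def)
  ultimately have s: "Sup A \<in> A" using closed_contains_Sup by blast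
  then have "Sup A \<le> t" "a \<le> Sup A" "g (Sup A) \<le> 0" by (auto simp: A_def)
  then have "Sup A < t" using \<open>\<not> g t \<le> 0\<close> by (cases "Sup A = t") auto
  obtain e where e: "e > Sup A" "\<And>t. Sup A < t \<Longrightarrow> t < e \<Longrightarrow> g t \<le> 0"
    using step[of "Sup A"] \<open>a \<le> Sup A\<close> \<open>g (Sup A) \<le> 0\<close> \<open>Sup A < t\<close> t
    by (auto simp: eventually_at_right_field)
  define t' where "t' = (Sup A + min e t) / 2"
  have "Sup A < t'" "t' < e" "t' \<le> t" using e(1) \<open>Sup A < t\<close> by (auto simp: t'_def)
  then have "t' \<in> A" using e(2) \<open>a \<le> Sup A\<close> by (auto simp: A_def)
  then show False using \<open>Sup A < t'\<close> cSup_upper[OF _ \<open>bdd_above A\<close>] by fastforce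
qed

section \<open>Barrier certificates and inductive invariants\<close>

lemma lie_iter_along_solution:
  assumes "poly_vf f" "polyfun B" "(z has_vector_derivative f (z t)) (at t within S)"
  shows "((\<lambda>t. lie_iter f k B (z t)) has_real_derivative lie_iter f (Suc k) B (z t)) (at t within S)"
  using lie_deriv_along_solution[of "lie_iter f k B" z f t S] polyfun_lie_iter[OF assms(1,2)] assms(3)
  by (simp add: lie_iter_Suc)

lemma solution_continuous_on:
  "(\<And>t. t \<in> S \<Longrightarrow> (z has_vector_derivative f (z t)) (at t within S)) \<Longrightarrow> continuous_on S z"
  using continuous_on_eq_continuous_within has_vector_derivative_continuous by blast

lemma inductive_invariantD:
  assumes "inductive_invariant f Psi" "z 0 \<in> Psi"
    and "\<And>t. t \<in> {0..<T} \<Longrightarrow> (z has_vector_derivative f (z t)) (at t within {0..<T})"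
    and "t \<in> {0..<T}"
  shows "z t \<in> Psi"
  using assms unfolding inductive_invariant_def by blast

lemma poly_vf_local_solution_exists:
  assumes "poly_vf f"
  shows "\<exists>\<delta>>0. \<exists>z. z 0 = x0 \<and> (\<forall>t\<in>{0..<\<delta>}. (z has_vector_derivative f (z t)) (at t within {0..<\<delta>}))"
proof -
  obtain L where "L-lipschitz_on (cball x0 1) f"
    using poly_vf_lipschitz_on_compact[OF assms compact_cball] by blast
  then show ?thesis by (rule local_solution_exists) simp
qed

lemma inv_barrier_cert_eventually_nonpos_at_right:
  assumes f: "poly_vf f" and B: "polyfun B" and cert: "inv_barrier_cert f X0 Xu B"
    and sol: "\<And>t. t \<in> {s..b} \<Longrightarrow> (z has_vector_derivative f (z t)) (at t within {s..b})"
    and "s < b" and "B (z s) \<le> 0"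
  shows "\<forall>\<^sub>F t in at_right s. B (z t) \<le> 0"
proof -
  define N where "N = compl_threshold B f"
  obtain h where h: "\<forall>j\<le>N. polyfun (h j)" "\<forall>x. lie_iter f (Suc N) B x = (\<Sum>j\<le>N. h j x * lie_iter f j B x)"
    using compl_threshold_in_poly_ideal[OF f B] unfolding N_def in_poly_ideal_def by blast
  have "compact (\<Union>j\<le>N. (\<lambda>t. h j (z t)) ` {s..b})"
    using h(1) solution_continuous_on[OF sol]
    by (intro compact_UN compact_continuous_image continuous_on_compose2[OF polyfun_continuous_on]) auto
  then obtain M where M: "\<And>j t. j \<le> N \<Longrightarrow> t \<in> {s..b} \<Longrightarrow> \<bar>h j (z t)\<bar> \<le> M"
    by (fastforce dest!: compact_imp_bounded simp: bounded_real)
  have "\<forall>\<^sub>F t in at_right s. lie_iter f 0 B (z t) \<le> 0"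
  proof (rule eventually_nonpos_at_right_of_derivative_chain[OF \<open>s < b\<close>])
    show "((\<lambda>t. lie_iter f k B (z t)) has_real_derivative lie_iter f (Suc k) B (z t)) (at t within {s..b})"
      if "t \<in> {s..b}" for k t
      by (rule lie_iter_along_solution[OF f B sol[OF that]])
    show "lie_iter f (Suc N) B (z t) = (\<Sum>j\<le>N. h j (z t) * lie_iter f j B (z t))" for t
      using h(2) by simp
    show "lie_iter f i B (z s) \<le> 0" if "i \<le> N" "\<And>k. k < i \<Longrightarrow> lie_iter f k B (z s) = 0" for i
    proof (cases "i = 0")
      case False
      have "\<forall>j. j \<le> i - 1 \<longrightarrow> lie_iter f j B (z s) = 0" using that(2) False by auto
      then show ?thesis
        using cert that(1) False unfolding inv_barrier_cert_def N_def by auto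
    qed (use \<open>B (z s) \<le> 0\<close> in simp)
  qed (use M in auto)
  then show ?thesis by simp
qed

lemma inductive_invariant_if_inv_barrier_cert:
  assumes f: "poly_vf f" and B: "polyfun B" and cert: "inv_barrier_cert f X0 Xu B"
  shows "inductive_invariant f {x. B x \<le> 0}"
  unfolding inductive_invariant_def
proof (intro ballI allI impI)
  fix x0 T z t
  assume "x0 \<in> {x. B x \<le> 0}"
    and z: "z 0 = x0 \<and> (\<forall>t\<in>{0..<T}. (z has_vector_derivative f (z t)) (at t within {0..<T}))"
    and t: "t \<in> {0..<T}"
  have sol: "(z has_vector_derivative f (z u)) (at u within {s..t})" if "u \<in> {s..t}" "0 \<le> s" for s u
  proof -
    have "u \<in> {0..<T}" using that t by auto
    then have "(z has_vector_derivative f (z u)) (at u within {0..<T})" using z by blast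
    then show ?thesis by (rule has_vector_derivative_within_subset) (use that t in auto)
  qed
  have "continuous_on {0..t} z"
    by (rule solution_continuous_on[of _ _ f]) (rule sol, auto)
  then have cont: "continuous_on {0..t} (\<lambda>u. B (z u))"
    by (rule continuous_on_compose2[OF polyfun_continuous_on[OF B]]) auto
  have step: "\<forall>\<^sub>F u in at_right s. B (z u) \<le> 0" if "s \<in> {0..<t}" "B (z s) \<le> 0" for s
  proof (rule inv_barrier_cert_eventually_nonpos_at_right[OF f B cert])
    show "(z has_vector_derivative f (z u)) (at u within {s..t})" if "u \<in> {s..t}" for u
      using sol that \<open>s \<in> {0..<t}\<close> by simp
  qed (use that in auto)
  have "B (z t) \<le> 0"
    using nonpos_on_Icc_of_eventually_nonpos_at_right[OF cont _ step] z \<open>x0 \<in> {x. B x \<le> 0}\<close> t by auto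
  then show "z t \<in> {x. B x \<le> 0}" by simp
qed

lemma first_nonzero_lie_iter_nonpos:
  assumes f: "poly_vf f" and B: "polyfun B" and inv: "inductive_invariant f {x. B x \<le> 0}"
    and zero: "\<And>k. k < i \<Longrightarrow> lie_iter f k B x = 0" and "0 < i"
  shows "lie_iter f i B x \<le> 0"
proof (rule ccontr)
  assume pos: "\<not> lie_iter f i B x \<le> 0"
  obtain \<delta> z where \<delta>: "\<delta> > 0" "z 0 = x"
    "\<And>t. t \<in> {0..<\<delta>} \<Longrightarrow> (z has_vector_derivative f (z t)) (at t within {0..<\<delta>})"
    using poly_vf_local_solution_exists[OF f] by blast
  have "B x = 0" using zero[of 0] \<open>0 < i\<close> by simp
  then have stay: "B (z t) \<le> 0" if "t \<in> {0..<\<delta>}" for t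
    using inductive_invariantD[OF inv _ \<delta>(3) that] \<delta>(2) by simp
  have der: "((\<lambda>t. - lie_iter f k B (z t)) has_real_derivative - lie_iter f (Suc k) B (z t))
      (at t within {0..\<delta> / 2})" if "t \<in> {0..\<delta> / 2}" for k t
  proof -
    have "t \<in> {0..<\<delta>}" using that \<delta>(1) by auto
    from DERIV_minus[OF lie_iter_along_solution[OF f B \<delta>(3)[OF this]]]
    show ?thesis by (rule DERIV_subset) (use \<delta>(1) in auto)
  qed
  have "\<forall>\<^sub>F t in at_right 0. - lie_iter f 0 B (z t) < 0"
  proof (rule eventually_neg_at_right_of_first_nonzero_derivative[where i = i])
    show "continuous_on {0..\<delta> / 2} (\<lambda>t. - lie_iter f i B (z t))"
      using der by (intro DERIV_continuous_on) blast
    show "- lie_iter f k B (z 0) = 0" if "k < i" for k using zero that \<delta>(2) by simp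
    show "((\<lambda>t. - lie_iter f k B (z t)) has_real_derivative - lie_iter f (Suc k) B (z t))
        (at t within {0..\<delta> / 2})" if "k < i" "t \<in> {0..\<delta> / 2}" for k t
      using der[OF that(2)] .
    show "- lie_iter f i B (z 0) < 0" using pos \<delta>(2) by simp
  qed (use \<delta>(1) in simp)
  then obtain e where e: "e > 0" "\<forall>t>0. t < e \<longrightarrow> - lie_iter f 0 B (z t) < 0"
    unfolding eventually_at_right_field by blast
  define t where "t = min (e / 2) (\<delta> / 2)"
  have "0 < t" "t < e" "t \<in> {0..<\<delta>}" using \<delta>(1) e(1) by (auto simp: t_def)
  then show False using e(2) stay[of t] by fastforce
qed

lemma inv_barrier_cert_if_inductive_invariant:
  assumes f: "poly_vf f" and B: "polyfun B" and inv: "inductive_invariant f {x. B x \<le> 0}"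
    and "X0 \<subseteq> {x. B x \<le> 0}" and "{x. B x \<le> 0} \<inter> Xu = {}"
  shows "inv_barrier_cert f X0 Xu B"
  unfolding inv_barrier_cert_def
proof (intro conjI ballI allI impI)
  show "B x \<le> 0" if "x \<in> X0" for x using that assms(4) by auto
  show "B x > 0" if "x \<in> Xu" for x using that assms(5) not_le by blast
  show "lie_iter f i B x \<le> 0"
    if "1 \<le> i \<and> i \<le> compl_threshold B f" "\<forall>j. j \<le> i - 1 \<longrightarrow> lie_iter f j B x = 0" for x i
    using that by (intro first_nonzero_lie_iter_nonpos[OF f B inv]) auto
qed

theorem theorem4:
  fixes f :: "real ^ 'n \<Rightarrow> real ^ 'n" and B :: "real ^ 'n \<Rightarrow> real"
    and X0 Xu :: "(real ^ 'n) set"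
  assumes "poly_vf f" and "polyfun B"
  shows "(inv_barrier_cert f X0 Xu B \<longrightarrow> inductive_invariant f {x. B x \<le> 0})
       \<and> (inductive_invariant f {x. B x \<le> 0} \<and> X0 \<subseteq> {x. B x \<le> 0}
            \<and> {x. B x \<le> 0} \<inter> Xu = {}
          \<longrightarrow> inv_barrier_cert f X0 Xu B)"
  using inductive_invariant_if_inv_barrier_cert[OF assms] inv_barrier_cert_if_inductive_invariant[OF assms]
  by blast

end
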